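(* Let $(S,d)$ be a metric space and $\bullet\in\{\mathrm{FM},\mathrm{BL}\}$. If $f\in B^S_\bullet$ satisfies $|f|=\mathbf{1}$, then $f\in\operatorname{ext}(B^S_\bullet)$. In particular, if $\bullet=\mathrm{BL}$, then $f=\pm\mathbf{1}$.
   Context: $\mathrm{BL}(S)$ is the space of bounded real-valued Lipschitz functions on $S$, $|f|_L=\sup_{x\neq y}|f(x)-f(y)|/d(x,y)$, $\|f\|_{\mathrm{BL}}=\|f\|_\infty+|f|_L$, $\|f\|_{\mathrm{FM}}=\max(\|f\|_\infty,|f|_L)$, $B^S_\bullet=\{f\in\mathrm{BL}(S):\|f\|_\bullet\le1\}$, $\operatorname{ext}$ denotes the set of extreme points, and $\mathbf{1}$ is the constant function $1$. *)

theory Defs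
  imports "HOL-Analysis.Analysis"
begin

definition BL_space :: "('a::metric_space \<Rightarrow> real) set" where
  "BL_space = {f. bounded (range f) \<and> (\<exists>C. C-lipschitz_on UNIV f)}"

definition sup_norm :: "('a::metric_space \<Rightarrow> real) \<Rightarrow> real" where
  "sup_norm f = (SUP x. \<bar>f x\<bar>)"

text \<open>Lipschitz seminorm; the 0 covers the degenerate one-point space.\<close>
definition lip_norm :: "('a::metric_space \<Rightarrow> real) \<Rightarrow> real" where
  "lip_norm f = Sup (insert 0 {\<bar>f x - f y\<bar> / dist x y | x y. x \<noteq> y})"

definition BL_norm :: "('a::metric_space \<Rightarrow> real) \<Rightarrow> real" where
  "BL_norm f = sup_norm f + lip_norm f"

definition FM_norm :: "('a::metric_space \<Rightarrow> real) \<Rightarrow> real" where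
  "FM_norm f = max (sup_norm f) (lip_norm f)"

datatype norm_kind = FM | BL

fun the_norm :: "norm_kind \<Rightarrow> ('a::metric_space \<Rightarrow> real) \<Rightarrow> real" where
  "the_norm FM f = FM_norm f"
| "the_norm BL f = BL_norm f"

definition unit_ball :: "norm_kind \<Rightarrow> ('a::metric_space \<Rightarrow> real) set" where
  "unit_ball k = {f \<in> BL_space. the_norm k f \<le> 1}"

definition ext :: "('a \<Rightarrow> real) set \<Rightarrow> ('a \<Rightarrow> real) set" where
  "ext K = {f \<in> K. \<forall>g\<in>K. \<forall>h\<in>K. \<forall>t::real. 0 < t \<and> t < 1 \<and>
              f = (\<lambda>x. t * g x + (1 - t) * h x) \<longrightarrow> g = h}"

end

theory Submission
  imports Defs
begin

text \<open>Both norms dominate the sup norm, so every g in the unit ball satisfies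
  \<open>\<bar>g\<bar> \<le> 1\<close> pointwise; since \<open>\<plusminus>1\<close> are extreme points of \<open>[-1, 1]\<close>, a convex
  combination of two such functions can equal f at a point only if both agree
  with f there. For the BL norm, \<open>\<parallel>f\<parallel>\<^sub>\<infinity> = 1\<close> forces \<open>|f|\<^sub>L = 0\<close>, so f is constant.\<close>

lemma convex_comb_eq_1_imp_eq_1:
  fixes b c t :: real
  assumes "b \<le> 1" "c \<le> 1" "0 < t" "t < 1" "t * b + (1 - t) * c = 1"
  shows "b = 1" "c = 1"
proof -
  have "t * (1 - b) + (1 - t) * (1 - c) = 0"
    using assms(5) by (simp add: algebra_simps)
  moreover have "t * (1 - b) \<ge> 0" "(1 - t) * (1 - c) \<ge> 0"
    using assms(1-4) by simp_all
  ultimately have "t * (1 - b) = 0" "(1 - t) * (1 - c) = 0"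
    by linarith+
  then show "b = 1" "c = 1"
    using assms(3,4) by simp_all
qed

lemma convex_comb_abs_eq_1_imp_eq:
  fixes b c t :: real
  assumes "\<bar>b\<bar> \<le> 1" "\<bar>c\<bar> \<le> 1" "0 < t" "t < 1" "\<bar>t * b + (1 - t) * c\<bar> = 1"
  shows "b = c"
proof (cases "t * b + (1 - t) * c = 1")
  case True
  then show ?thesis
    using convex_comb_eq_1_imp_eq_1[of b c t] assms(1-4) by (simp add: abs_le_iff)
next
  case False
  then have "t * (- b) + (1 - t) * (- c) = 1"
    using assms(5) by (simp add: abs_if split: if_splits)
  then show ?thesis
    using convex_comb_eq_1_imp_eq_1[of "- b" "- c" t] assms(1-4) by (simp add: abs_le_iff)
qed

lemma ext_if_abs_eq_1:
  fixes K :: "('a \<Rightarrow> real) set"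
  assumes "\<And>g x. g \<in> K \<Longrightarrow> \<bar>g x\<bar> \<le> 1"
    and "f \<in> K" "\<forall>x. \<bar>f x\<bar> = 1"
  shows "f \<in> ext K"
  unfolding ext_def
proof (intro CollectI conjI ballI allI impI \<open>f \<in> K\<close>)
  fix g h t
  assume "g \<in> K" "h \<in> K" and t: "0 < t \<and> t < 1 \<and> f = (\<lambda>x. t * g x + (1 - t) * h x)"
  show "g = h"
  proof
    fix x
    have "\<bar>t * g x + (1 - t) * h x\<bar> = 1"
      using t assms(3) by metis
    then show "g x = h x"
      using convex_comb_abs_eq_1_imp_eq assms(1) \<open>g \<in> K\<close> \<open>h \<in> K\<close> t by blast
  qed
qed

lemma abs_le_sup_norm:
  assumes "f \<in> BL_space"
  shows "\<bar>f x\<bar> \<le> sup_norm f"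
proof -
  from assms obtain a where "\<forall>y\<in>range f. norm y \<le> a"
    unfolding BL_space_def bounded_iff by auto
  then have "bdd_above (range (\<lambda>x. \<bar>f x\<bar>))"
    by (auto intro!: bdd_aboveI2[where M = a])
  then show ?thesis
    unfolding sup_norm_def by (rule cSUP_upper[OF UNIV_I])
qed

lemma bdd_above_difference_quotients:
  assumes "f \<in> BL_space"
  shows "bdd_above (insert 0 {\<bar>f x - f y\<bar> / dist x y | x y. x \<noteq> y})"
proof -
  from assms obtain C where C: "C-lipschitz_on UNIV f"
    unfolding BL_space_def by auto
  have "\<bar>f x - f y\<bar> / dist x y \<le> C" if "x \<noteq> y" for x y
  proof -
    have "dist (f x) (f y) \<le> C * dist x y"
      using lipschitz_onD[OF C] by simp
    moreover have "dist x y > 0"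
      using that by simp
    ultimately show ?thesis
      by (simp add: dist_real_def pos_divide_le_eq)
  qed
  then show ?thesis
    by (intro bdd_aboveI[where M = "max 0 C"]) fastforce
qed

lemma lip_norm_nonneg:
  assumes "f \<in> BL_space"
  shows "0 \<le> lip_norm f"
  unfolding lip_norm_def
  by (rule cSup_upper[OF _ bdd_above_difference_quotients[OF assms]]) simp

lemma difference_quotient_le_lip_norm:
  assumes "f \<in> BL_space" "x \<noteq> y"
  shows "\<bar>f x - f y\<bar> / dist x y \<le> lip_norm f"
  unfolding lip_norm_def
  by (rule cSup_upper[OF _ bdd_above_difference_quotients[OF assms(1)]]) (use assms(2) in auto)

lemma constant_if_lip_norm_le_0:
  assumes "f \<in> BL_space" "lip_norm f \<le> 0"
  shows "f x = f y"
proof (cases "x = y")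
  case False
  then have "\<bar>f x - f y\<bar> / dist x y \<le> 0"
    using difference_quotient_le_lip_norm[OF assms(1)] assms(2) by fastforce
  then show ?thesis
    using False by (simp add: divide_le_0_iff)
qed simp

lemma sup_norm_le_the_norm:
  assumes "f \<in> BL_space"
  shows "sup_norm f \<le> the_norm k f"
  using lip_norm_nonneg[OF assms] by (cases k) (auto simp: FM_norm_def BL_norm_def)

lemma abs_le_1_if_in_unit_ball:
  assumes "g \<in> unit_ball k"
  shows "\<bar>g x\<bar> \<le> 1"
proof -
  have "g \<in> BL_space" "the_norm k g \<le> 1"
    using assms unfolding unit_ball_def by auto
  then show ?thesis
    using abs_le_sup_norm sup_norm_le_the_norm by (meson order_trans)
qed

theorem lemma3p1:
  fixes k :: norm_kind and f :: "'a::metric_space \<Rightarrow> real"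
  assumes "f \<in> unit_ball k"
    and "\<forall>x. \<bar>f x\<bar> = 1"
  shows "f \<in> ext (unit_ball k) \<and> (k = BL \<longrightarrow> f = (\<lambda>_. 1) \<or> f = (\<lambda>_. -1))"
proof
  show "f \<in> ext (unit_ball k)"
    using ext_if_abs_eq_1 abs_le_1_if_in_unit_ball assms by metis
  show "k = BL \<longrightarrow> f = (\<lambda>_. 1) \<or> f = (\<lambda>_. -1)"
  proof
    assume "k = BL"
    then have f: "f \<in> BL_space" "BL_norm f \<le> 1"
      using assms(1) unfolding unit_ball_def by auto
    have "sup_norm f = 1"
      unfolding sup_norm_def using assms(2) by simp
    then have "lip_norm f \<le> 0"
      using f(2) by (simp add: BL_norm_def)
    then have "f = (\<lambda>_. f undefined)"
      using constant_if_lip_norm_le_0[OF f(1)] by blast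
    moreover have "f undefined = 1 \<or> f undefined = -1"
      using assms(2) by (metis abs_if minus_minus)
    ultimately show "f = (\<lambda>_. 1) \<or> f = (\<lambda>_. -1)"
      by metis
  qed
qed

end
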